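(* Let $\mathcal{D}$ be a distribution on $\mathbb{S}^{d-1}$ for which there exist $C,C'>0$ with $C\mu(A)\le\mathcal{D}(A)\le C'\mu(A)$ for all measurable $A\subseteq\mathbb{S}^{d-1}$, where $\mu$ is the uniform (Haar) probability measure. There exist constants $\beta,\gamma>0$, depending only on $d$ and on $C,C'$, such that for all $\mathbf{x}^{(1)},\mathbf{x}^{(2)}\in\mathbb{S}^{d-1}$ with $\langle\mathbf{x}^{(1)},\mathbf{x}^{(2)}\rangle\ge0$, a random $\xi\sim\mathcal{D}$ satisfies both (1) $\mathrm{sgn}(\langle\mathbf{x}^{(1)},\xi\rangle)=\mathrm{sgn}(\langle\mathbf{x}^{(2)},\xi\rangle)$, and (2) $|\langle\mathbf{x}^{(i)},\xi\rangle|\ge\gamma$ for $i=1,2$, with probability at least $\beta$.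
   Context: $\mathbb{S}^{d-1}$ is the unit sphere in $\mathbb{R}^d$; $\mathrm{sgn}(0)=0$. *)

theory Defs
  imports "HOL-Probability.Probability"
begin

definition sphere_cone :: "'a::real_normed_vector set \<Rightarrow> 'a set" where
  "sphere_cone A = {t *\<^sub>R x | t x. 0 < t \<and> t \<le> 1 \<and> x \<in> A}"

text \<open>Uniform (normalised surface / Haar) probability measure of a subset of the unit sphere,
  via the cone construction: mu(A) = vol(cone A) / vol(unit ball).\<close>
definition unif_sphere :: "'a::euclidean_space set \<Rightarrow> real" where
  "unif_sphere A = measure lborel (sphere_cone A) / measure lborel (ball (0::'a) 1)"

definition bounded_sphere_distr :: "real \<Rightarrow> real \<Rightarrow> 'a::euclidean_space measure \<Rightarrow> bool" where
  "bounded_sphere_distr C C' D \<longleftrightarrow>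
     prob_space D \<and> space D = sphere 0 1 \<and>
     sets D = sets (restrict_space borel (sphere (0::'a) 1)) \<and>
     (\<forall>A\<in>sets D. C * unif_sphere A \<le> measure D A \<and> measure D A \<le> C' * unif_sphere A)"

end

theory Submission
  imports Defs
begin

(* Since x1 and x2 make an angle of at most 90 degrees, the ball of radius 1/8 around half their
   unit bisector lies in the punctured unit ball, and on it both x1 \<bullet> y and x2 \<bullet> y exceed
   1/8 while norm y < 5/8. Its normalisation to the sphere is thus a set of directions on which
   both inner products are at least 1/5 in absolute value with the same sign, and whose uniform
   measure is at least the volume ratio (1/8)^d. The lower density bound C transfers this to D. *)

definition margin_cone :: "'a::real_inner \<Rightarrow> 'a \<Rightarrow> real \<Rightarrow> 'a set" where
  "margin_cone x1 x2 g =
     {y. sgn (x1 \<bullet> y) = sgn (x2 \<bullet> y) \<and> g * norm y \<le> \<bar>x1 \<bullet> y\<bar> \<and> g * norm y \<le> \<bar>x2 \<bullet> y\<bar>}"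

lemma margin_cone_scaleR_iff:
  assumes "t > 0"
  shows "t *\<^sub>R y \<in> margin_cone x1 x2 g \<longleftrightarrow> y \<in> margin_cone x1 x2 g"
  using assms by (simp add: margin_cone_def abs_mult sgn_mult mult.left_commute)

lemma margin_cone_borel:
  "margin_cone (x1::'a::euclidean_space) x2 g \<in> sets borel"
proof -
  have "{y \<in> space borel. sgn (x1 \<bullet> y) = sgn (x2 \<bullet> y) \<and>
          g * norm y \<le> \<bar>x1 \<bullet> y\<bar> \<and> g * norm y \<le> \<bar>x2 \<bullet> y\<bar>} \<in> sets borel"
    by measurable
  then show ?thesis
    by (simp add: margin_cone_def)
qed

lemma sphere_margin_cone_eq:
  assumes "norm \<xi> = 1"
  shows "\<xi> \<in> margin_cone x1 x2 g \<longleftrightarrow>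
           sgn (x1 \<bullet> \<xi>) = sgn (x2 \<bullet> \<xi>) \<and> \<bar>x1 \<bullet> \<xi>\<bar> \<ge> g \<and> \<bar>x2 \<bullet> \<xi>\<bar> \<ge> g"
  using assms by (simp add: margin_cone_def)

lemma sphere_cone_sphere_Int_cone:
  fixes S :: "'a::real_normed_vector set"
  assumes scale: "\<And>t y. t > 0 \<Longrightarrow> t *\<^sub>R y \<in> S \<longleftrightarrow> y \<in> S"
  shows "sphere_cone (sphere 0 1 \<inter> S) = (cball 0 1 - {0}) \<inter> S"
proof
  show "sphere_cone (sphere 0 1 \<inter> S) \<subseteq> (cball 0 1 - {0}) \<inter> S"
    using scale by (auto simp: sphere_cone_def)
next
  show "(cball 0 1 - {0}) \<inter> S \<subseteq> sphere_cone (sphere 0 1 \<inter> S)"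
  proof
    fix y assume y: "y \<in> (cball 0 1 - {0}) \<inter> S"
    then have "norm y > 0" "norm y \<le> 1"
      by auto
    moreover have "y /\<^sub>R norm y \<in> sphere 0 1 \<inter> S"
      using y scale[of "inverse (norm y)" y] by auto
    moreover have "y = norm y *\<^sub>R (y /\<^sub>R norm y)"
      using \<open>norm y > 0\<close> by simp
    ultimately show "y \<in> sphere_cone (sphere 0 1 \<inter> S)"
      unfolding sphere_cone_def by blast
  qed
qed

lemma unif_sphere_ge_ball:
  fixes A :: "'a::euclidean_space set"
  assumes "A \<subseteq> sphere 0 1" "sphere_cone A \<in> sets lborel" "ball v r \<subseteq> sphere_cone A" "r \<ge> 0"
  shows "r ^ DIM('a) \<le> unif_sphere A"
proof -
  have "sphere_cone A \<subseteq> cball 0 1"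
    using assms(1) by (auto simp: sphere_cone_def)
  then have "sphere_cone A \<in> fmeasurable lborel"
    using assms(2) by (intro fmeasurableI2[OF fmeasurable_compact[OF compact_cball]])
  then have "measure lborel (ball v r) \<le> measure lborel (sphere_cone A)"
    using assms(3) by (intro measure_mono_fmeasurable) auto
  then have "r ^ DIM('a) * measure lborel (ball (0::'a) 1) \<le> measure lborel (sphere_cone A)"
    using content_ball_conv_unit_ball[OF \<open>r \<ge> 0\<close>, of v] by simp
  then show ?thesis
    unfolding unif_sphere_def using content_ball_pos[of 1 "0::'a"]
    by (simp add: pos_le_divide_eq)
qed

lemma inner_bisector_ge:
  fixes x1 x2 :: "'a::real_inner"
  assumes "norm x1 = 1" "norm x2 = 1" "x1 \<bullet> x2 \<ge> 0"
  defines "u \<equiv> (x1 + x2) /\<^sub>R norm (x1 + x2)"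
  shows "norm u = 1" "x1 \<bullet> u \<ge> 1/2" "x2 \<bullet> u \<ge> 1/2"
proof -
  have unit: "x1 \<bullet> x1 = 1" "x2 \<bullet> x2 = 1"
    using assms(1,2) by (simp_all add: dot_square_norm)
  then have "norm (x1 + x2) ^ 2 = 2 + 2 * (x1 \<bullet> x2)"
    by (simp add: power2_norm_eq_inner inner_add_left inner_add_right inner_commute)
  then have pos: "norm (x1 + x2) > 0"
    using assms(3) by (cases "norm (x1 + x2) = 0") auto
  have le2: "norm (x1 + x2) \<le> 2"
    using norm_triangle_ineq[of x1 x2] assms(1,2) by simp
  have "x1 \<bullet> u = (1 + x1 \<bullet> x2) / norm (x1 + x2)" "x2 \<bullet> u = (1 + x1 \<bullet> x2) / norm (x1 + x2)"
    using unit unfolding u_def inner_scaleR_right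
    by (simp_all add: inner_add_right inner_commute divide_inverse mult.commute)
  moreover have "(1 + x1 \<bullet> x2) / norm (x1 + x2) \<ge> 1/2"
    using pos le2 assms(3) by (simp add: pos_le_divide_eq)
  ultimately show "x1 \<bullet> u \<ge> 1/2" "x2 \<bullet> u \<ge> 1/2"
    by simp_all
  show "norm u = 1"
    using pos by (simp add: u_def)
qed

lemma inner_gt_on_ball:
  fixes x :: "'a::real_inner"
  assumes "norm x = 1" "y \<in> ball v r"
  shows "x \<bullet> y > x \<bullet> v - r"
proof -
  have "\<bar>x \<bullet> (y - v)\<bar> \<le> norm (y - v)"
    using Cauchy_Schwarz_ineq2[of x "y - v"] assms(1) by simp
  moreover have "norm (y - v) < r"
    using assms(2) by (simp add: dist_norm norm_minus_commute)
  ultimately show ?thesis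
    by (simp add: inner_diff_right)
qed

lemma ball_subset_margin_cone:
  fixes x1 x2 :: "'a::real_inner"
  assumes "norm x1 = 1" "norm x2 = 1" "x1 \<bullet> x2 \<ge> 0"
  defines "v \<equiv> (1/2) *\<^sub>R ((x1 + x2) /\<^sub>R norm (x1 + x2))"
  shows "ball v (1/8) \<subseteq> (cball 0 1 - {0}) \<inter> margin_cone x1 x2 (1/5)"
proof
  fix y assume y: "y \<in> ball v (1/8)"
  have "norm v = 1/2" "x1 \<bullet> v \<ge> 1/4" "x2 \<bullet> v \<ge> 1/4"
    using inner_bisector_ge[OF assms(1-3)] by (simp_all add: v_def)
  moreover have "x1 \<bullet> y > x1 \<bullet> v - 1/8" "x2 \<bullet> y > x2 \<bullet> v - 1/8"
    using inner_gt_on_ball[OF _ y] assms(1,2) by auto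
  moreover have "norm y < norm v + 1/8"
    using y norm_triangle_ineq[of v "y - v"] by (simp add: dist_norm norm_minus_commute)
  ultimately have "x1 \<bullet> y > 1/8" "x2 \<bullet> y > 1/8" "norm y < 5/8"
    by linarith+
  then show "y \<in> (cball 0 1 - {0}) \<inter> margin_cone x1 x2 (1/5)"
    by (auto simp: margin_cone_def)
qed

lemma bounded_sphere_distr_lower:
  assumes "bounded_sphere_distr C C' D" "A \<subseteq> sphere 0 1" "A \<in> sets borel"
  shows "C * unif_sphere A \<le> measure D A"
proof -
  have "A \<in> sets D"
    using assms by (auto simp: bounded_sphere_distr_def sets_restrict_space_iff)
  then show ?thesis
    using assms(1) by (simp add: bounded_sphere_distr_def)
qed

theorem lemma3p5:
  fixes C C' :: real
  assumes "C > 0" and "C' > 0"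
  shows "\<exists>\<beta>>0. \<exists>\<gamma>>0. \<forall>D :: (real ^ 'n) measure. bounded_sphere_distr C C' D \<longrightarrow>
           (\<forall>x1\<in>sphere 0 1. \<forall>x2\<in>sphere 0 1. x1 \<bullet> x2 \<ge> 0 \<longrightarrow>
              measure D {\<xi> \<in> space D. sgn (x1 \<bullet> \<xi>) = sgn (x2 \<bullet> \<xi>) \<and>
                                       \<bar>x1 \<bullet> \<xi>\<bar> \<ge> \<gamma> \<and> \<bar>x2 \<bullet> \<xi>\<bar> \<ge> \<gamma>} \<ge> \<beta>)"
proof (rule exI[of _ "C * (1/8) ^ DIM(real ^ 'n)"], intro conjI exI[of _ "1/5::real"] allI impI ballI)
  fix D :: "(real ^ 'n) measure" and x1 x2 :: "real ^ 'n"
  assume D: "bounded_sphere_distr C C' D" and x: "x1 \<in> sphere 0 1" "x2 \<in> sphere 0 1"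
    and "x1 \<bullet> x2 \<ge> 0"
  define E where "E = sphere 0 1 \<inter> margin_cone x1 x2 (1/5)"
  have set_eq: "{\<xi> \<in> space D. sgn (x1 \<bullet> \<xi>) = sgn (x2 \<bullet> \<xi>) \<and>
                               \<bar>x1 \<bullet> \<xi>\<bar> \<ge> 1/5 \<and> \<bar>x2 \<bullet> \<xi>\<bar> \<ge> 1/5} = E"
    using D by (auto simp: E_def bounded_sphere_distr_def sphere_margin_cone_eq)
  have cone: "sphere_cone E = (cball 0 1 - {0}) \<inter> margin_cone x1 x2 (1/5)"
    unfolding E_def by (rule sphere_cone_sphere_Int_cone) (rule margin_cone_scaleR_iff)
  have "sphere_cone E \<in> sets lborel"
    unfolding cone sets_lborel by (intro sets.Int sets.Diff borel_closed margin_cone_borel) auto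
  moreover have "ball ((1/2) *\<^sub>R ((x1 + x2) /\<^sub>R norm (x1 + x2))) (1/8) \<subseteq> sphere_cone E"
    unfolding cone using ball_subset_margin_cone x \<open>x1 \<bullet> x2 \<ge> 0\<close> by simp
  ultimately have "(1/8) ^ DIM(real ^ 'n) \<le> unif_sphere E"
    by (intro unif_sphere_ge_ball) (auto simp: E_def)
  then have "C * (1/8) ^ DIM(real ^ 'n) \<le> C * unif_sphere E"
    using \<open>C > 0\<close> by simp
  also have "\<dots> \<le> measure D E"
    unfolding E_def
    by (intro bounded_sphere_distr_lower[OF D] sets.Int borel_closed margin_cone_borel) auto
  finally show "measure D {\<xi> \<in> space D. sgn (x1 \<bullet> \<xi>) = sgn (x2 \<bullet> \<xi>) \<and>
                   \<bar>x1 \<bullet> \<xi>\<bar> \<ge> 1/5 \<and> \<bar>x2 \<bullet> \<xi>\<bar> \<ge> 1/5} \<ge> C * (1/8) ^ DIM(real ^ 'n)"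
    by (simp only: set_eq)
qed (use assms in auto)

end
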